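(* Let $N\ge 1$ be an odd integer and $q,p$ odd, relatively prime integers, and let $H(N,q,p)=\{(R(q\theta),R(p\theta+2\pi i/N)):\theta\in\mathbb{R},\ i\in\{0,\dots,N-1\}\}$. Then there exists $\phi\in L^2(\mathcal P,\lambda,\mathbb{R})$ whose stabilizer $\{k\in\mathrm{SO}(2)\times\mathrm{SO}(2): T'(k)\phi=\phi \text{ in } L^2\}$ equals $H(N,q,p)$. In particular, every infinite potential little group $H(N,q,p)$ (with $N$ odd and $q,p$ odd and relatively prime) is an actual little group of the ultrahyperbolic BMS group.
   Context: $R(\theta)=\begin{pmatrix}\cos\theta & \sin\theta\\ -\sin\theta & \cos\theta\end{pmatrix}$. $\mathcal P=P_1(\mathbb{R})\times P_1(\mathbb{R})$ with $P_1(\mathbb{R})=\mathbb{R}\cup\{\infty\}$; angular coordinates $x=\cot(\rho/2)$, $y=\cot(\sigma/2)$; $\lambda$ is the $\mathrm{SO}(2)\times\mathrm{SO}(2)$-invariant measure $d\rho\,d\sigma$; $L^2(\mathcal P,\lambda,\mathbb{R})$ is the real Hilbert space of square-integrable real functions on $\mathcal P$. For $g=\begin{pmatrix}a&b\\c&d\end{pmatrix}\in\mathrm{SL}(2,\mathbb{R})$: $xg=\frac{xa+c}{xb+d}$, $k_g(x)=\left(\frac{(xb+d)^2+(xa+c)^2}{1+x^2}\right)^{1/2}$, $s_g(x)=\frac{xb+d}{|xb+d|}$, and $(T'(g,h)\phi)(x,y)=k_g^{-3}(x)s_g(x)k_h^{-3}(y)s_h(y)\phi(xg,yh)$. The ultrahyperbolic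 BMS group is the semidirect product $L^2(\mathcal P,\lambda,\mathbb{R})\rtimes(\mathrm{SL}(2,\mathbb{R})\times\mathrm{SL}(2,\mathbb{R}))$ with dual action $T'$; a little group is the stabilizer of some $\phi$ under $T'$. *)

theory Defs
  imports "HOL-Analysis.Analysis"
begin

text \<open>The projective line P_1(R) = R \<union> {\<infinity>}, with None playing the role of \<infinity>.\<close>
type_synonym P1 = "real option"

text \<open>2x2 real matrices g = (a b; c d), with a = g$1$1, b = g$1$2, c = g$2$1, d = g$2$2.\<close>
definition rotM :: "real \<Rightarrow> real^2^2" where
  "rotM \<theta> = vector [vector [cos \<theta>, sin \<theta>], vector [- sin \<theta>, cos \<theta>]]"

definition SO2 :: "(real^2^2) set" where
  "SO2 = range rotM"

definition SL2 :: "(real^2^2) set" where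
  "SL2 = {g. det g = 1}"

definition P1act :: "P1 \<Rightarrow> real^2^2 \<Rightarrow> P1" where
  "P1act x g = (let a = g$1$1; b = g$1$2; c = g$2$1; d = g$2$2 in
     (case x of
        None \<Rightarrow> (if b = 0 then None else Some (a / b))
      | Some t \<Rightarrow> (if t * b + d = 0 then None else Some ((t * a + c) / (t * b + d)))))"

definition kfac :: "real^2^2 \<Rightarrow> P1 \<Rightarrow> real" where
  "kfac g x = (let a = g$1$1; b = g$1$2; c = g$2$1; d = g$2$2 in
     (case x of
        None \<Rightarrow> sqrt (b\<^sup>2 + a\<^sup>2)
      | Some t \<Rightarrow> sqrt (((t * b + d)\<^sup>2 + (t * a + c)\<^sup>2) / (1 + t\<^sup>2))))"

text \<open>s_g(x) = (x b + d)/|x b + d|; its values on the null set where it is undefined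
  (x = \<infinity>, or x b + d = 0) are fixed by convention.\<close>
definition sfac :: "real^2^2 \<Rightarrow> P1 \<Rightarrow> real" where
  "sfac g x = (let b = g$1$2; d = g$2$2 in
     (case x of None \<Rightarrow> sgn b | Some t \<Rightarrow> sgn (t * b + d)))"

definition Tdual :: "(real^2^2) \<times> (real^2^2) \<Rightarrow> (P1 \<times> P1 \<Rightarrow> real) \<Rightarrow> (P1 \<times> P1 \<Rightarrow> real)" where
  "Tdual k \<phi> = (\<lambda>(x, y).
     inverse (kfac (fst k) x ^ 3) * sfac (fst k) x *
     inverse (kfac (snd k) y ^ 3) * sfac (snd k) y *
     \<phi> (P1act x (fst k), P1act y (snd k)))"

definition P1space :: "P1 measure" where
  "P1space = sigma UNIV {A. Some -` A \<in> sets borel}"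

text \<open>Angular coordinate \<rho> \<in> [0, 2\<pi>) with x = cot(\<rho>/2); \<rho> = 0 gives \<infinity>.\<close>
definition angpt :: "real \<Rightarrow> P1" where
  "angpt \<rho> = (if sin (\<rho> / 2) = 0 then None else Some (cot (\<rho> / 2)))"

text \<open>The SO(2)-invariant measure d\<rho> on P_1(R).\<close>
definition lamP1 :: "P1 measure" where
  "lamP1 = distr (restrict_space lborel {0..<2*pi}) P1space angpt"

definition lamP :: "(P1 \<times> P1) measure" where
  "lamP = lamP1 \<Otimes>\<^sub>M lamP1"

definition L2P :: "(P1 \<times> P1 \<Rightarrow> real) set" where
  "L2P = {\<phi>. \<phi> \<in> borel_measurable lamP \<and> integrable lamP (\<lambda>z. (\<phi> z)\<^sup>2)}"

definition stabSO :: "(P1 \<times> P1 \<Rightarrow> real) \<Rightarrow> ((real^2^2) \<times> (real^2^2)) set" where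
  "stabSO \<phi> = {k \<in> SO2 \<times> SO2. AE z in lamP. Tdual k \<phi> z = \<phi> z}"

definition Hgrp :: "nat \<Rightarrow> int \<Rightarrow> int \<Rightarrow> ((real^2^2) \<times> (real^2^2)) set" where
  "Hgrp N q p = {(rotM (of_int q * \<theta>), rotM (of_int p * \<theta> + 2 * pi * real i / real N)) | \<theta> i.
                  i \<in> {0..<N}}"

end

theory Submission
  imports Defs
begin

text \<open>Write \<open>x = cot u\<close> with \<open>u \<in> (0, \<pi>)\<close>. A rotation \<open>R(a)\<close> acts on \<open>P\<^sub>1(\<real>)\<close> by
  \<open>u \<mapsto> u + a\<close> modulo \<open>\<pi>\<close>, with \<open>k = 1\<close> and \<open>s = \<plusminus>1\<close> recording the parity of the reduction.
  Hence for odd \<open>m, n\<close> the function \<open>cos (m u - n v)\<close> is carried by \<open>(R(a), R(b))\<close> to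
  \<open>cos (m u - n v + m a - n b)\<close> almost everywhere, and these two functions differ on a set of
  positive measure unless \<open>m a - n b \<in> 2\<pi>\<int>\<close>. For \<open>m = M p\<close>, \<open>n = M q\<close> with
  \<open>M = N / gcd N q\<close> (odd since \<open>N\<close> is) Bezout's identity shows that the pairs with
  \<open>m a \<equiv> n b\<close> modulo \<open>2\<pi>\<close> are exactly \<open>H(N, q, p)\<close>.\<close>

lemma countable_sin_zeros:
  assumes "k \<noteq> 0"
  shows "countable {u :: real. sin (k * u + d) = 0}"
proof (rule countable_subset)
  show "{u. sin (k * u + d) = 0} \<subseteq> range (\<lambda>i :: int. (of_int i * pi - d) / k)"
    using assms by (auto simp: sin_zero_iff_int2 field_simps intro: range_eqI)
qed simp

lemma exists_in_interval_not_in_countable: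
  fixes a b :: real
  assumes "a < b" "countable Z"
  obtains u where "a < u" "u < b" "u \<notin> Z"
proof -
  have "uncountable ({a<..<b} - Z)"
    using assms by (intro uncountable_minus_countable) (simp_all add: uncountable_open_interval)
  then obtain u where "u \<in> {a<..<b} - Z" by (metis countable_empty ex_in_conv)
  with that show thesis by auto
qed

text \<open>Half the angular coordinate \<open>\<rho>\<close> of \<open>angpt\<close>: \<open>x = cot (half_angle x)\<close>, and \<open>\<infinity>\<close> has
  half-angle \<open>0\<close>.\<close>
definition half_angle :: "P1 \<Rightarrow> real" where
  "half_angle x = (case x of None \<Rightarrow> 0 | Some t \<Rightarrow> pi / 2 - arctan t)"

lemma half_angle_Some_bounds: "0 < half_angle (Some t)" "half_angle (Some t) < pi"
  using arctan_bounded[of t] by (auto simp: half_angle_def)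

lemma cot_half_angle: "cot (half_angle (Some t)) = t"
  by (simp add: half_angle_def tan_cot' [symmetric] tan_arctan)

lemma half_angle_cot:
  assumes "0 < w" "w < pi"
  shows "half_angle (Some (cot w)) = w"
proof -
  have "arctan (cot w) = arctan (tan (pi / 2 - w))" by (simp add: tan_cot')
  also have "\<dots> = pi / 2 - w" using assms by (intro arctan_tan) auto
  finally show ?thesis by (simp add: half_angle_def)
qed

lemma half_angle_cot_mod_pi:
  assumes "sin w \<noteq> 0"
  obtains n :: int where "half_angle (Some (cot w)) = w - of_int n * pi"
    and "sgn (sin w) = (if even n then 1 else -1)"
proof -
  define n where "n = \<lfloor>w / pi\<rfloor>"
  define w' where "w' = w - of_int n * pi"
  have "of_int n * pi \<le> w" "w < (of_int n + 1) * pi"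
    using floor_divide_lower[of pi w] floor_divide_upper[of pi w] by (simp_all add: n_def)
  then have "0 \<le> w'" "w' < pi" by (auto simp: w'_def algebra_simps)
  have sin_w': "sin w' = (if even n then sin w else - sin w)"
    and cos_w': "cos w' = (if even n then cos w else - cos w)"
    by (simp_all add: w'_def sin_diff cos_diff mult.commute[of _ pi])
  have "w' \<noteq> 0" using sin_w' assms by (auto split: if_splits)
  with \<open>0 \<le> w'\<close> have "0 < w'" by simp
  then have "sin w' > 0" using \<open>w' < pi\<close> by (rule sin_gt_zero)
  have "cot w' = cot w" using sin_w' cos_w' by (simp add: cot_def)
  then have "half_angle (Some (cot w)) = w'" using half_angle_cot[OF \<open>0 < w'\<close> \<open>w' < pi\<close>] by simp
  moreover have "sgn (sin w) = (if even n then 1 else -1)"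
    using \<open>sin w' > 0\<close> sin_w' by (auto split: if_splits)
  ultimately show thesis using that unfolding w'_def by blast
qed

lemma rotM_entries [simp]:
  "rotM a $1$1 = cos a" "rotM a $1$2 = sin a" "rotM a $2$1 = - sin a" "rotM a $2$2 = cos a"
  by (simp_all add: rotM_def)

lemma rotM_add_2pi_int: "rotM (x + 2 * pi * of_int k) = rotM x"
  using sin_cos_eq_iff[of "x + 2 * pi * of_int k" x] by (auto simp: rotM_def)

lemma rotM_act_cot:
  assumes "0 < u" "u < pi"
  shows "P1act (Some (cot u)) (rotM a) = (if sin (u + a) = 0 then None else Some (cot (u + a)))"
    and "kfac (rotM a) (Some (cot u)) = 1"
    and "sfac (rotM a) (Some (cot u)) = sgn (sin (u + a))"
proof -
  have "sin u > 0" using assms by (rule sin_gt_zero)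
  have denom: "cot u * sin a + cos a = sin (u + a) / sin u"
    and numer: "cot u * cos a - sin a = cos (u + a) / sin u"
    using \<open>sin u > 0\<close> by (simp_all add: cot_def sin_add cos_add field_simps)
  show "P1act (Some (cot u)) (rotM a) = (if sin (u + a) = 0 then None else Some (cot (u + a)))"
  proof -
    have "P1act (Some (cot u)) (rotM a) = (if cot u * sin a + cos a = 0 then None
        else Some ((cot u * cos a - sin a) / (cot u * sin a + cos a)))"
      by (simp add: P1act_def Let_def)
    then show ?thesis using \<open>sin u > 0\<close> unfolding denom numer by (simp add: cot_def)
  qed
  have "(sin (u + a) / sin u)\<^sup>2 + (cos (u + a) / sin u)\<^sup>2 = 1 + (cot u)\<^sup>2"
    using \<open>sin u > 0\<close> by (simp add: cot_def field_simps power2_eq_square sin_squared_eq)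
  moreover have "1 + (cot u)\<^sup>2 \<noteq> 0" using zero_le_power2[of "cot u"] by linarith
  ultimately show "kfac (rotM a) (Some (cot u)) = 1"
    by (simp add: kfac_def Let_def denom numer)
  show "sfac (rotM a) (Some (cot u)) = sgn (sin (u + a))"
    using \<open>sin u > 0\<close> by (simp add: sfac_def Let_def denom sgn_divide)
qed

lemma kfac_rotM [simp]: "kfac (rotM a) (Some t) = 1"
  using rotM_act_cot(2)[OF half_angle_Some_bounds] by (simp add: cot_half_angle)

lemma half_angle_P1act_rotM:
  assumes "sin (half_angle (Some t) + a) \<noteq> 0"
  obtains j :: int
  where "half_angle (P1act (Some t) (rotM a)) = half_angle (Some t) + a - of_int j * pi"
    and "sfac (rotM a) (Some t) = (if even j then 1 else -1)"
proof -
  note act = rotM_act_cot[OF half_angle_Some_bounds(1)[of t] half_angle_Some_bounds(2)[of t], of a,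
      unfolded cot_half_angle]
  obtain j :: int
    where "half_angle (Some (cot (half_angle (Some t) + a))) = half_angle (Some t) + a - of_int j * pi"
    and "sgn (sin (half_angle (Some t) + a)) = (if even j then 1 else -1)"
    using half_angle_cot_mod_pi[OF assms] .
  with that show thesis using assms act by simp
qed

definition wave :: "int \<Rightarrow> int \<Rightarrow> P1 \<times> P1 \<Rightarrow> real" where
  "wave m n = (\<lambda>(x, y). cos (of_int m * half_angle x - of_int n * half_angle y))"

text \<open>Rotations shift half-angles only modulo \<open>\<pi>\<close>; for odd \<open>m\<close> and \<open>n\<close> the resulting sign
  change of \<open>wave m n\<close> is exactly compensated by the factors \<open>sfac\<close>.\<close>
lemma Tdual_rotM_wave:
  assumes "odd m" "odd n"
    and "sin (half_angle (Some t) + a) \<noteq> 0" "sin (half_angle (Some s) + b) \<noteq> 0"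
  shows "Tdual (rotM a, rotM b) (wave m n) (Some t, Some s)
      = cos (of_int m * (half_angle (Some t) + a) - of_int n * (half_angle (Some s) + b))"
proof -
  obtain j :: int
    where j: "half_angle (P1act (Some t) (rotM a)) = half_angle (Some t) + a - of_int j * pi"
      "sfac (rotM a) (Some t) = (if even j then 1 else -1)"
    using half_angle_P1act_rotM[OF assms(3)] .
  obtain l :: int
    where l: "half_angle (P1act (Some s) (rotM b)) = half_angle (Some s) + b - of_int l * pi"
      "sfac (rotM b) (Some s) = (if even l then 1 else -1)"
    using half_angle_P1act_rotM[OF assms(4)] .
  define X where "X = of_int m * (half_angle (Some t) + a) - of_int n * (half_angle (Some s) + b)"
  define k where "k = m * j - n * l"
  have shift: "of_int m * (half_angle (Some t) + a - of_int j * pi)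
      - of_int n * (half_angle (Some s) + b - of_int l * pi) = X - of_int k * pi"
    by (simp add: X_def k_def algebra_simps)
  have "cos (X - of_int k * pi) = (if even k then cos X else - cos X)"
    by (simp add: cos_diff mult.commute[of _ pi])
  moreover have "even k = even (j + l)" using assms(1,2) by (auto simp: k_def)
  ultimately show ?thesis
    unfolding X_def[symmetric] by (simp add: Tdual_def wave_def j l shift)
qed

lemma space_P1space [simp]: "space P1space = UNIV"
  by (simp add: P1space_def space_measure_of_conv)

lemma borel_measurable_P1spaceI:
  assumes "(\<lambda>t. f (Some t)) \<in> borel_measurable borel"
  shows "f \<in> borel_measurable P1space"
proof (rule measurableI)
  fix A :: "'a set" assume "A \<in> sets borel"
  then have "Some -` (f -` A) \<in> sets borel"
    using measurable_sets[OF assms] by (simp add: vimage_def)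
  then show "f -` A \<inter> space P1space \<in> sets P1space"
    by (simp add: P1space_def sigma_sets.Basic)
qed auto

lemma half_angle_measurable [measurable]: "half_angle \<in> borel_measurable P1space"
  by (rule borel_measurable_P1spaceI) (simp add: half_angle_def)

lemma angpt_measurable: "angpt \<in> measurable lborel P1space"
  unfolding P1space_def
proof (rule measurable_measure_of)
  fix A :: "P1 set" assume "A \<in> {A. Some -` A \<in> sets borel}"
  moreover have "(\<lambda>r::real. cot (r / 2)) \<in> borel_measurable borel"
    unfolding cot_def by measurable
  ultimately have "(\<lambda>r::real. cot (r / 2)) -` (Some -` A) \<in> sets borel"
    using measurable_sets[of "\<lambda>r::real. cot (r / 2)" borel borel "Some -` A"] by simp
  moreover have "angpt -` A \<inter> space lborel = ({r. sin (r / 2) = 0} \<inter> {r. None \<in> A})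
      \<union> ({r. sin (r / 2) \<noteq> 0} \<inter> (\<lambda>r. cot (r / 2)) -` (Some -` A))"
    by (auto simp: angpt_def split: if_splits)
  moreover have "{r::real. None \<in> A} \<in> sets borel" by (cases "None \<in> A") auto
  ultimately show "angpt -` A \<inter> space lborel \<in> sets lborel" by auto
qed auto

lemma sets_lamP1 [measurable_cong]: "sets lamP1 = sets P1space"
  by (simp add: lamP1_def)

lemma space_lamP1 [simp]: "space lamP1 = UNIV"
  by (simp add: lamP1_def)

lemma space_lamP [simp]: "space lamP = UNIV"
  by (simp add: lamP_def space_pair_measure)

lemma finite_measure_lamP1: "finite_measure lamP1"
  unfolding lamP1_def
  by (intro finite_measure.finite_measure_distr finite_measureI measurable_restrict_space1
      angpt_measurable) (simp add: emeasure_restrict_space)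

lemma emeasure_lamP1_half_angle_vimage:
  assumes "A \<in> sets borel"
  shows "emeasure lamP1 (half_angle -` A) = emeasure lborel (angpt -` half_angle -` A \<inter> {0..<2*pi})"
proof -
  have "half_angle -` A \<in> sets P1space"
    using measurable_sets[OF half_angle_measurable assms] by simp
  then show ?thesis
    unfolding lamP1_def
    by (subst emeasure_distr) (auto intro: measurable_restrict_space1 angpt_measurable
        simp: emeasure_restrict_space)
qed

lemma angpt_half_angle_vimage_sets:
  assumes "A \<in> sets borel"
  shows "angpt -` half_angle -` A \<inter> {0..<2*pi} \<in> sets lborel"
proof -
  have "angpt -` half_angle -` A \<in> sets lborel"
    using measurable_sets[OF measurable_comp[OF angpt_measurable half_angle_measurable] assms]
    by (simp add: vimage_comp)
  then show ?thesis by auto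
qed

lemma half_angle_angpt:
  assumes "0 < r" "r < 2 * pi"
  shows "half_angle (angpt r) = r / 2"
proof -
  have "sin (r / 2) > 0" using assms by (intro sin_gt_zero) auto
  then show ?thesis using assms by (simp add: angpt_def half_angle_cot)
qed

lemma half_angle_vimage_countable_null:
  assumes "countable Z"
  shows "half_angle -` Z \<in> null_sets lamP1"
proof -
  have "Z \<in> sets borel"
    using null_setsD2[OF countable_imp_null_set_lborel[OF assms]] by simp
  have "angpt -` half_angle -` Z \<inter> {0..<2*pi} \<subseteq> insert 0 ((\<lambda>u. 2 * u) ` Z)"
  proof
    fix r assume r: "r \<in> angpt -` half_angle -` Z \<inter> {0..<2*pi}"
    show "r \<in> insert 0 ((\<lambda>u. 2 * u) ` Z)"
    proof (cases "r = 0")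
      case False
      with r have "half_angle (angpt r) = r / 2" by (intro half_angle_angpt) auto
      moreover have "half_angle (angpt r) \<in> Z" using r by simp
      ultimately have "r / 2 \<in> Z" by metis
      then show ?thesis by (intro insertI2 image_eqI[where x = "r / 2"]) auto
    qed simp
  qed
  moreover have "insert 0 ((\<lambda>u. 2 * u) ` Z) \<in> null_sets lborel"
    using assms by (intro countable_imp_null_set_lborel) auto
  moreover have "angpt -` half_angle -` Z \<inter> {0..<2*pi} \<in> sets lborel"
    using \<open>Z \<in> sets borel\<close> by (rule angpt_half_angle_vimage_sets)
  ultimately have "angpt -` half_angle -` Z \<inter> {0..<2*pi} \<in> null_sets lborel"
    by (rule null_sets_subset[rotated 2])
  then show ?thesis
    using emeasure_lamP1_half_angle_vimage[OF \<open>Z \<in> sets borel\<close>]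
      measurable_sets[OF half_angle_measurable \<open>Z \<in> sets borel\<close>]
    by (simp add: null_sets_def sets_lamP1)
qed

lemma emeasure_lamP1_half_angle_vimage_pos:
  assumes "open A" "u \<in> A" "0 < u" "u < pi"
  shows "0 < emeasure lamP1 (half_angle -` A)"
proof -
  obtain e where "e > 0" "ball u e \<subseteq> A" using assms(1,2) by (rule openE)
  define \<delta> where "\<delta> = min e (min u (pi - u))"
  have "\<delta> > 0" "\<delta> \<le> e" "\<delta> \<le> u" "\<delta> \<le> pi - u"
    using \<open>e > 0\<close> assms(3,4) by (simp_all add: \<delta>_def)
  have "{2 * (u - \<delta>)<..<2 * (u + \<delta>)} \<subseteq> angpt -` half_angle -` A \<inter> {0..<2*pi}"
  proof
    fix r assume r: "r \<in> {2 * (u - \<delta>)<..<2 * (u + \<delta>)}"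
    then have "0 < r" "r < 2 * pi" using \<open>\<delta> \<le> u\<close> \<open>\<delta> \<le> pi - u\<close> by auto
    moreover have "r / 2 \<in> ball u e" using r \<open>\<delta> \<le> e\<close> by (auto simp: dist_real_def)
    ultimately show "r \<in> angpt -` half_angle -` A \<inter> {0..<2*pi}"
      using \<open>ball u e \<subseteq> A\<close> half_angle_angpt[of r] by (metis IntI atLeastLessThan_iff
          less_eq_real_def subsetD vimageI)
  qed
  then have "emeasure lborel {2 * (u - \<delta>)<..<2 * (u + \<delta>)}
      \<le> emeasure lborel (angpt -` half_angle -` A \<inter> {0..<2*pi})"
    using assms(1) by (intro emeasure_mono angpt_half_angle_vimage_sets) auto
  moreover have "0 < emeasure lborel {2 * (u - \<delta>)<..<2 * (u + \<delta>)}"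
    using \<open>\<delta> > 0\<close> by simp
  ultimately show ?thesis
    using assms(1) by (simp add: emeasure_lamP1_half_angle_vimage)
qed

lemma AE_lamP_exists_half_angles_in_open:
  assumes "AE z in lamP. P z" "open S" "(u, v) \<in> S"
    and "0 < u" "u < pi" "0 < v" "v < pi"
  obtains t s where "(half_angle (Some t), half_angle (Some s)) \<in> S" "P (Some t, Some s)"
proof -
  interpret lamP1: finite_measure lamP1 by (rule finite_measure_lamP1)
  obtain A B where "open A" "open B" "(u, v) \<in> A \<times> B" "A \<times> B \<subseteq> S"
    using assms(2,3) by (rule open_prod_elim)
  \<comment> \<open>Cutting down to \<open>(0, \<pi>)\<close> excludes \<open>\<infinity>\<close>, whose half-angle is \<open>0\<close>.\<close>
  define X where "X = half_angle -` (A \<inter> {0<..<pi})"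
  define Y where "Y = half_angle -` (B \<inter> {0<..<pi})"
  have "0 < emeasure lamP1 X"
    unfolding X_def using \<open>open A\<close> \<open>(u, v) \<in> A \<times> B\<close> assms(4,5)
    by (intro emeasure_lamP1_half_angle_vimage_pos[of _ u]) auto
  moreover have "0 < emeasure lamP1 Y"
    unfolding Y_def using \<open>open B\<close> \<open>(u, v) \<in> A \<times> B\<close> assms(6,7)
    by (intro emeasure_lamP1_half_angle_vimage_pos[of _ v]) auto
  moreover have "X \<in> sets lamP1" "Y \<in> sets lamP1"
    unfolding X_def Y_def sets_lamP1 using \<open>open A\<close> \<open>open B\<close>
    by (auto intro!: measurable_sets[OF half_angle_measurable, simplified])
  ultimately have "0 < emeasure lamP (X \<times> Y)"
    by (simp add: lamP_def lamP1.emeasure_pair_measure_Times ennreal_zero_less_mult_iff)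
  from assms(1) obtain N where N: "{z. \<not> P z} \<subseteq> N" "N \<in> null_sets lamP"
    by (auto elim!: AE_E simp: null_sets_def)
  have "\<not> X \<times> Y \<subseteq> N"
  proof
    assume "X \<times> Y \<subseteq> N"
    then have "emeasure lamP (X \<times> Y) \<le> emeasure lamP N"
      using N(2) by (intro emeasure_mono) auto
    with \<open>0 < emeasure lamP (X \<times> Y)\<close> N(2) show False by auto
  qed
  then obtain x y where "x \<in> X" "y \<in> Y" "P (x, y)" using N(1) by auto
  moreover from \<open>x \<in> X\<close> \<open>y \<in> Y\<close> obtain t s where "x = Some t" "y = Some s"
    by (cases x; cases y) (auto simp: X_def Y_def half_angle_def)
  ultimately show thesis
    using that \<open>A \<times> B \<subseteq> S\<close> by (auto simp: X_def Y_def)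
qed

lemma wave_measurable: "wave m n \<in> borel_measurable lamP"
proof -
  have "half_angle \<in> borel_measurable lamP1"
    using half_angle_measurable by (simp add: measurable_cong_sets[OF sets_lamP1 refl])
  then have "(\<lambda>z. cos (of_int m * half_angle (fst z) - of_int n * half_angle (snd z)))
      \<in> borel_measurable (lamP1 \<Otimes>\<^sub>M lamP1)"
    by measurable
  then show ?thesis by (simp add: wave_def lamP_def case_prod_beta')
qed

lemma wave_L2P: "wave m n \<in> L2P"
proof -
  have "finite_measure lamP"
    unfolding lamP_def by (intro finite_measure_pair_measure finite_measure_lamP1)
  moreover have "(\<lambda>z. (wave m n z)\<^sup>2) \<in> borel_measurable lamP"
    using wave_measurable by measurable
  ultimately have "integrable lamP (\<lambda>z. (wave m n z)\<^sup>2)"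
    by (intro finite_measure.integrable_const_bound[where B = 1])
      (auto simp: wave_def abs_square_le_1 split: prod.splits)
  then show ?thesis using wave_measurable by (simp add: L2P_def)
qed

lemma AE_Tdual_rotM_wave:
  assumes "odd m" "odd n" "of_int m * a - of_int n * b = 2 * pi * of_int k"
  shows "AE z in lamP. Tdual (rotM a, rotM b) (wave m n) z = wave m n z"
proof -
  interpret lamP1: finite_measure lamP1 by (rule finite_measure_lamP1)
  define Za where "Za = insert 0 {u. sin (u + a) = 0}"
  define Zb where "Zb = insert 0 {v. sin (v + b) = 0}"
  have "countable {u :: real. sin (u + c) = 0}" for c
    using countable_sin_zeros[of 1 c] by simp
  then have "half_angle -` Za \<in> null_sets lamP1" "half_angle -` Zb \<in> null_sets lamP1"
    unfolding Za_def Zb_def by (auto intro: half_angle_vimage_countable_null)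
  then have "half_angle -` Za \<times> UNIV \<union> UNIV \<times> half_angle -` Zb \<in> null_sets lamP"
    unfolding lamP_def
    by (intro null_sets.Un lamP1.times_in_null_sets1 lamP1.times_in_null_sets2)
      (auto simp flip: space_lamP1)
  moreover have "Tdual (rotM a, rotM b) (wave m n) (x, y) = wave m n (x, y)"
    if generic: "half_angle x \<notin> Za" "half_angle y \<notin> Zb" for x y
  proof -
    obtain t s where ts: "x = Some t" "y = Some s"
      using generic by (cases x; cases y) (auto simp: Za_def Zb_def half_angle_def)
    have "of_int m * (half_angle x + a) - of_int n * (half_angle y + b)
        = (of_int m * half_angle x - of_int n * half_angle y) + 2 * pi * of_int k"
      using assms(3) by (simp add: algebra_simps)
    then show ?thesis
      using generic Tdual_rotM_wave[OF assms(1,2), of t a s b]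
      by (simp add: ts Za_def Zb_def wave_def cos_add)
  qed
  ultimately show ?thesis
    by (intro AE_I'[where N = "half_angle -` Za \<times> UNIV \<union> UNIV \<times> half_angle -` Zb"]) auto
qed

lemma not_AE_Tdual_rotM_wave:
  assumes "odd m" "odd n" "sin ((of_int m * a - of_int n * b) / 2) \<noteq> 0"
  shows "\<not> (AE z in lamP. Tdual (rotM a, rotM b) (wave m n) z = wave m n z)"
proof
  assume AE: "AE z in lamP. Tdual (rotM a, rotM b) (wave m n) z = wave m n z"
  define C where "C = of_int m * a - of_int n * b"
  define S where "S = {(u, v). sin (u + a) \<noteq> 0 \<and> sin (v + b) \<noteq> 0
      \<and> sin (of_int m * u - of_int n * v + C / 2) \<noteq> 0}"
  have "m \<noteq> 0" using assms(1) by auto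
  have "countable {v. sin (v + b) = 0}" using countable_sin_zeros[of 1 b] by simp
  then obtain v where v: "0 < v" "v < pi" "sin (v + b) \<noteq> 0"
    using exists_in_interval_not_in_countable[OF pi_gt_zero] by blast
  have "countable ({u. sin (u + a) = 0} \<union> {u. sin (of_int m * u + (C / 2 - of_int n * v)) = 0})"
    using countable_sin_zeros[of 1 a] countable_sin_zeros[of "of_int m"] \<open>m \<noteq> 0\<close> by simp
  then obtain u where u: "0 < u" "u < pi" "sin (u + a) \<noteq> 0"
    "sin (of_int m * u + (C / 2 - of_int n * v)) \<noteq> 0"
    using exists_in_interval_not_in_countable[OF pi_gt_zero] by blast
  have "(u, v) \<in> S" using u v by (simp add: S_def algebra_simps)
  moreover have "open S"
    unfolding S_def by (auto simp: case_prod_beta' intro!: open_Collect_conj open_Collect_neq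
        continuous_intros)
  ultimately obtain t s where ts: "(half_angle (Some t), half_angle (Some s)) \<in> S"
      "Tdual (rotM a, rotM b) (wave m n) (Some t, Some s) = wave m n (Some t, Some s)"
    using AE_lamP_exists_half_angles_in_open[OF AE _ _ u(1,2) v(1,2)] by blast
  define W where "W = of_int m * half_angle (Some t) - of_int n * half_angle (Some s)"
  have "Tdual (rotM a, rotM b) (wave m n) (Some t, Some s) = cos (W + C)"
    using ts(1) Tdual_rotM_wave[OF assms(1,2), of t a s b]
    by (simp add: S_def W_def C_def algebra_simps)
  moreover have "cos (W + C) - cos W = - 2 * sin (W + C / 2) * sin (C / 2)"
    by (simp add: cos_diff_cos field_simps)
  ultimately show False
    using ts assms(3) by (simp add: S_def W_def C_def wave_def)
qed

definition locked_rotations :: "int \<Rightarrow> int \<Rightarrow> ((real^2^2) \<times> (real^2^2)) set" where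
  "locked_rotations m n =
     {(rotM a, rotM b) | a b. \<exists>k :: int. of_int m * a - of_int n * b = 2 * pi * of_int k}"

lemma stabSO_wave:
  assumes "odd m" "odd n"
  shows "stabSO (wave m n) = locked_rotations m n"
proof (intro equalityI subsetI)
  fix g assume "g \<in> stabSO (wave m n)"
  then obtain a b where g: "g = (rotM a, rotM b)"
    and "AE z in lamP. Tdual (rotM a, rotM b) (wave m n) z = wave m n z"
    by (auto simp: stabSO_def SO2_def)
  then have "sin ((of_int m * a - of_int n * b) / 2) = 0"
    using not_AE_Tdual_rotM_wave[OF assms] by blast
  then obtain k :: int where "of_int m * a - of_int n * b = 2 * pi * of_int k"
    by (auto simp: sin_zero_iff_int2 field_simps)
  then show "g \<in> locked_rotations m n" by (auto simp: locked_rotations_def g)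
next
  fix g assume "g \<in> locked_rotations m n"
  then show "g \<in> stabSO (wave m n)"
    using AE_Tdual_rotM_wave[OF assms] by (auto simp: locked_rotations_def stabSO_def SO2_def)
qed

lemma Hgrp_subset_locked_rotations:
  assumes "N \<ge> 1" "M * q = int N * q'"
  shows "Hgrp N q p \<subseteq> locked_rotations (M * p) (M * q)"
proof
  fix g assume "g \<in> Hgrp N q p"
  then obtain \<theta> i
    where g: "g = (rotM (of_int q * \<theta>), rotM (of_int p * \<theta> + 2 * pi * real i / real N))"
    by (auto simp: Hgrp_def)
  have "real_of_int M * real_of_int q = real N * of_int q'"
    using arg_cong[OF assms(2), of real_of_int] by simp
  then have "of_int (M * p) * (of_int q * \<theta>)
      - of_int (M * q) * (of_int p * \<theta> + 2 * pi * real i / real N) = 2 * pi * of_int (- (q' * int i))"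
    using assms(1) by (simp add: algebra_simps)
  then show "g \<in> locked_rotations (M * p) (M * q)"
    unfolding g locked_rotations_def by blast
qed

lemma locked_rotations_subset_Hgrp:
  assumes "N \<ge> 1" "q \<noteq> 0" "M \<noteq> 0" "M * q = int N * q'" "coprime (M * p) q'"
  shows "locked_rotations (M * p) (M * q) \<subseteq> Hgrp N q p"
proof
  fix g assume "g \<in> locked_rotations (M * p) (M * q)"
  then obtain a b k where g: "g = (rotM a, rotM b)"
    and k: "of_int (M * p) * a - of_int (M * q) * b = 2 * pi * of_int k"
    by (auto simp: locked_rotations_def)
  obtain x y where "x * (M * p) + y * q' = 1"
    using bezout_int[of "M * p" q'] assms(5) by (auto simp: coprime_iff_gcd_eq_1)
  then have jl: "M * p * (k * x) - q' * (- k * y) = k"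
    by (metis mult.commute mult.left_commute mult_minus_left diff_minus_eq_add distrib_left
        mult.right_neutral)
  define i where "i = nat ((- k * y) mod int N)"
  define w where "w = (- k * y) div int N"
  have "i < N" using assms(1) by (simp add: i_def nat_less_iff)
  have iw: "- k * y = int N * w + int i" using assms(1) by (simp add: i_def w_def)
  define \<theta> where "\<theta> = (a - 2 * pi * of_int (k * x)) / of_int q"
  have a: "a = of_int q * \<theta> + 2 * pi * of_int (k * x)"
    using assms(2) by (simp add: \<theta>_def)
  have "real_of_int M * of_int q = real N * of_int q'"
    using arg_cong[OF assms(4), of real_of_int] by simp
  then have "of_int M * of_int q * (of_int p * \<theta> + 2 * pi * real i / real N + 2 * pi * of_int w)
      = of_int (M * p) * (of_int q * \<theta>) + 2 * pi * of_int (q' * (int N * w + int i))"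
    using assms(1) by (simp add: field_simps)
  also have "\<dots> = of_int (M * p) * a - 2 * pi * of_int (M * p * (k * x) - q' * (- k * y))"
    unfolding a iw by (simp add: algebra_simps)
  also have "\<dots> = of_int M * of_int q * b"
    using k unfolding jl by simp
  finally have "of_int M * of_int q * b
      = of_int M * of_int q * (of_int p * \<theta> + 2 * pi * real i / real N + 2 * pi * of_int w)" ..
  then have "b = of_int p * \<theta> + 2 * pi * real i / real N + 2 * pi * of_int w"
    using assms(2,3) by simp
  then have "g = (rotM (of_int q * \<theta>), rotM (of_int p * \<theta> + 2 * pi * real i / real N))"
    unfolding g a by (simp only: rotM_add_2pi_int)
  then show "g \<in> Hgrp N q p"
    using \<open>i < N\<close> unfolding Hgrp_def by auto
qed

theorem mainTheorem7:
  fixes N :: nat and q p :: int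
  assumes "N \<ge> 1" and "odd N"
    and "odd q" and "odd p" and "coprime q p"
  shows "\<exists>\<phi> \<in> L2P. stabSO \<phi> = Hgrp N q p"
proof -
  define g where "g = gcd (int N) q"
  define M where "M = int N div g"
  define q' where "q' = q div g"
  have N_eq: "int N = M * g" and q_eq: "q = q' * g" by (simp_all add: M_def q'_def g_def)
  then have "M * q = int N * q'" by simp
  have "odd M" using \<open>odd N\<close> N_eq by (metis even_mult_iff even_of_nat)
  then have "odd (M * p)" "odd (M * q)" using \<open>odd p\<close> \<open>odd q\<close> by simp_all
  have "coprime M q'"
    unfolding M_def q'_def g_def using \<open>N \<ge> 1\<close> by (intro div_gcd_coprime) auto
  moreover have "coprime p q'"
    using \<open>coprime q p\<close> q_eq by (metis coprime_commute coprime_mult_right_iff)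
  ultimately have "coprime (M * p) q'" by simp
  have "stabSO (wave (M * p) (M * q)) = Hgrp N q p"
    using Hgrp_subset_locked_rotations[OF \<open>N \<ge> 1\<close> \<open>M * q = int N * q'\<close>]
      locked_rotations_subset_Hgrp[OF \<open>N \<ge> 1\<close> _ _ \<open>M * q = int N * q'\<close> \<open>coprime (M * p) q'\<close>]
      \<open>odd M\<close> \<open>odd q\<close>
    by (auto simp: stabSO_wave[OF \<open>odd (M * p)\<close> \<open>odd (M * q)\<close>])
  then show ?thesis using wave_L2P by blast
qed

end
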